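(* For every $n\ge1$, the DFA $\mathcal W_n$ defined below is minimal, accepts a right ideal, and its transition semigroup has size $n^{n-1}$.
   Context: $Q_n=\{0,\dots,n-1\}$. Notation: $(p\to q)$ maps $p$ to $q$ and fixes all other states; $(p_0,\dots,p_{k-1})$ is the cyclic permutation $p_0\mapsto\cdots\mapsto p_{k-1}\mapsto p_0$ fixing other states; $\mathbf 1$ is the identity. For $n\ge3$, $\mathcal W_n$ has states $Q_n$, initial state $0$, final states $\{n-1\}$, alphabet $\{a,b,c,d\}$, with $a$ inducing $(0,1,\dots,n-2)$, $b$ inducing $(0,1)$, $c$ inducing $(n-2\to 0)$, $d$ inducing $(n-2\to n-1)$ (for $n=3$, $a$ and $b$ coincide and alphabet $\{a,c,d\}$ suffices). $\mathcal W_2$ has states $Q_2$, initial $0$, final $\{1\}$, alphabet $\{a,b\}$, $a$ inducing $(0\to1)$ and $b$ inducing $\mathbf 1$. $\mathcal W_1$ has the single state $0$, which is initial and final, alphabet $\{a\}$, $a$ inducing $\mathbf 1$. A right ideal is a nonempty $L$ with $L=L\Sigma^*$. The transition semigroup is the set of state transformations induced by nonempty words. *)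

theory Defs
  imports "HOL-Library.FuncSet"
begin

definition run :: "('a \<Rightarrow> 's \<Rightarrow> 's) \<Rightarrow> 's \<Rightarrow> 'a list \<Rightarrow> 's" where
  "run \<delta> q w = foldl (\<lambda>p a. \<delta> a p) q w"

definition is_dfa :: "'s set \<Rightarrow> 'a set \<Rightarrow> ('a \<Rightarrow> 's \<Rightarrow> 's) \<Rightarrow> 's \<Rightarrow> 's set \<Rightarrow> bool" where
  "is_dfa Q \<Sigma> \<delta> q0 F \<longleftrightarrow> finite Q \<and> finite \<Sigma> \<and> \<Sigma> \<noteq> {} \<and> q0 \<in> Q \<and> F \<subseteq> Q \<and>
     (\<forall>a\<in>\<Sigma>. \<forall>q\<in>Q. \<delta> a q \<in> Q)"

definition lang :: "'a set \<Rightarrow> ('a \<Rightarrow> 's \<Rightarrow> 's) \<Rightarrow> 's \<Rightarrow> 's set \<Rightarrow> 'a list set" where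
  "lang \<Sigma> \<delta> q0 F = {w. set w \<subseteq> \<Sigma> \<and> run \<delta> q0 w \<in> F}"

text \<open>Minimal: no DFA over the same alphabet accepting the same language has fewer states.
  (Competitor state sets are taken inside nat, which loses no generality for finite DFAs.)\<close>
definition minimal_dfa :: "'s set \<Rightarrow> 'a set \<Rightarrow> ('a \<Rightarrow> 's \<Rightarrow> 's) \<Rightarrow> 's \<Rightarrow> 's set \<Rightarrow> bool" where
  "minimal_dfa Q \<Sigma> \<delta> q0 F \<longleftrightarrow> is_dfa Q \<Sigma> \<delta> q0 F \<and>
     (\<forall>(Q'::nat set) \<delta>' q0' F'. is_dfa Q' \<Sigma> \<delta>' q0' F' \<and> lang \<Sigma> \<delta>' q0' F' = lang \<Sigma> \<delta> q0 F
        \<longrightarrow> card Q \<le> card Q')"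

definition right_ideal :: "'a set \<Rightarrow> 'a list set \<Rightarrow> bool" where
  "right_ideal \<Sigma> L \<longleftrightarrow> L \<noteq> {} \<and> L = {u @ v |u v. u \<in> L \<and> v \<in> lists \<Sigma>}"

definition trans_semigroup :: "'s set \<Rightarrow> 'a set \<Rightarrow> ('a \<Rightarrow> 's \<Rightarrow> 's) \<Rightarrow> ('s \<Rightarrow> 's) set" where
  "trans_semigroup Q \<Sigma> \<delta> = {restrict (\<lambda>q. run \<delta> q w) Q |w. w \<noteq> [] \<and> set w \<subseteq> \<Sigma>}"

text \<open>States {0..<n}; letters are encoded as naturals: a = 0, b = 1, c = 2, d = 3.\<close>

definition W_sigma :: "nat \<Rightarrow> nat set" where
  "W_sigma n = (if n \<ge> 3 then {0,1,2,3} else if n = 2 then {0,1} else {0})"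

definition W_delta :: "nat \<Rightarrow> nat \<Rightarrow> nat \<Rightarrow> nat" where
  "W_delta n x q =
    (if n \<ge> 3 then
       (if x = 0 then (if q < n - 2 then q + 1 else if q = n - 2 then 0 else q)
        else if x = 1 then (if q = 0 then 1 else if q = 1 then 0 else q)
        else if x = 2 then (if q = n - 2 then 0 else q)
        else if x = 3 then (if q = n - 2 then n - 1 else q)
        else q)
     else if n = 2 then (if x = 0 \<and> q = 0 then 1 else q)
     else q)"

end

theory Submission
  imports Defs "HOL-Combinatorics.Permutations"
begin

text \<open>Every letter fixes the final state \<open>n - 1\<close>, so it is a sink: the language is a right ideal,
  and every induced transformation maps \<open>{0..<n}\<close> into itself and fixes \<open>n - 1\<close>, which leaves
  at most \<open>n ^ (n - 1)\<close> candidates. Conversely, for \<open>n \<ge> 3\<close> the letters \<open>a\<close> and \<open>b\<close> generate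
  all permutations of \<open>{0..<n - 1}\<close>; conjugating the merges \<open>c\<close> and \<open>d\<close> by them yields every
  \<open>id(y := z)\<close>, and peeling off one such merge at a time realizes every candidate.
  The transformations \<open>id(0 := q)\<close> and \<open>id(p := n - 1)\<close> then show that all states are reachable
  and pairwise distinguishable, hence the DFA is minimal.\<close>

lemma run_Nil [simp]: "run \<delta> q [] = q"
  by (simp add: run_def)

lemma run_Cons [simp]: "run \<delta> q (a # w) = run \<delta> (\<delta> a q) w"
  by (simp add: run_def)

lemma run_append [simp]: "run \<delta> q (u @ v) = run \<delta> (run \<delta> q u) v"
  by (simp add: run_def)

lemma run_closed:
  assumes "\<forall>a\<in>\<Sigma>. \<forall>q\<in>Q. \<delta> a q \<in> Q" and "q \<in> Q" and "set w \<subseteq> \<Sigma>"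
  shows "run \<delta> q w \<in> Q"
  using assms(2,3) by (induction w arbitrary: q) (use assms(1) in auto)

lemma minimal_dfa_if_reachable_distinguishable:
  assumes dfa: "is_dfa Q \<Sigma> \<delta> q0 F"
    and reachable: "\<forall>q\<in>Q. \<exists>w. set w \<subseteq> \<Sigma> \<and> run \<delta> q0 w = q"
    and distinguishable:
      "\<forall>p\<in>Q. \<forall>q\<in>Q. p \<noteq> q \<longrightarrow> (\<exists>v. set v \<subseteq> \<Sigma> \<and> (run \<delta> p v \<in> F) \<noteq> (run \<delta> q v \<in> F))"
  shows "minimal_dfa Q \<Sigma> \<delta> q0 F"
  unfolding minimal_dfa_def
proof (intro conjI allI impI)
  show "is_dfa Q \<Sigma> \<delta> q0 F" by (fact dfa)
  fix Q' :: "nat set" and \<delta>' q0' F'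
  assume "is_dfa Q' \<Sigma> \<delta>' q0' F' \<and> lang \<Sigma> \<delta>' q0' F' = lang \<Sigma> \<delta> q0 F"
  then have dfa': "is_dfa Q' \<Sigma> \<delta>' q0' F'" and same_lang: "lang \<Sigma> \<delta>' q0' F' = lang \<Sigma> \<delta> q0 F"
    by auto
  from reachable obtain w where w: "\<And>q. q \<in> Q \<Longrightarrow> set (w q) \<subseteq> \<Sigma> \<and> run \<delta> q0 (w q) = q"
    by metis
  let ?f = "\<lambda>q. run \<delta>' q0' (w q)"
  have "inj_on ?f Q"
  proof (rule inj_onI, rule ccontr)
    fix p q assume p: "p \<in> Q" and q: "q \<in> Q" and "?f p = ?f q" and "p \<noteq> q"
    then obtain v where v: "set v \<subseteq> \<Sigma>" and "(run \<delta> p v \<in> F) \<noteq> (run \<delta> q v \<in> F)"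
      using distinguishable by blast
    then have "(w p @ v \<in> lang \<Sigma> \<delta> q0 F) \<noteq> (w q @ v \<in> lang \<Sigma> \<delta> q0 F)"
      using w[OF p] w[OF q] by (simp add: lang_def)
    moreover have "(w p @ v \<in> lang \<Sigma> \<delta>' q0' F') = (w q @ v \<in> lang \<Sigma> \<delta>' q0' F')"
      using \<open>?f p = ?f q\<close> w[OF p] w[OF q] v by (simp add: lang_def)
    ultimately show False by (simp add: same_lang)
  qed
  moreover have "?f ` Q \<subseteq> Q'"
    using dfa' w run_closed[of \<Sigma> Q' \<delta>'] by (auto simp: is_dfa_def)
  moreover have "finite Q'"
    using dfa' by (simp add: is_dfa_def)
  ultimately show "card Q \<le> card Q'"
    by (rule card_inj_on_le)
qed

lemma right_ideal_if_final_closed: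
  assumes "lang \<Sigma> \<delta> q0 F \<noteq> {}" and F_closed: "\<forall>a\<in>\<Sigma>. \<forall>q\<in>F. \<delta> a q \<in> F"
  shows "right_ideal \<Sigma> (lang \<Sigma> \<delta> q0 F)"
  unfolding right_ideal_def
proof (intro conjI equalityI subsetI)
  show "lang \<Sigma> \<delta> q0 F \<noteq> {}" by fact
  fix w assume "w \<in> lang \<Sigma> \<delta> q0 F"
  then show "w \<in> {u @ v |u v. u \<in> lang \<Sigma> \<delta> q0 F \<and> v \<in> lists \<Sigma>}"
    by (intro CollectI exI[of _ w] exI[of _ "[]"]) simp
next
  fix w assume "w \<in> {u @ v |u v. u \<in> lang \<Sigma> \<delta> q0 F \<and> v \<in> lists \<Sigma>}"
  then obtain u v where "w = u @ v" "u \<in> lang \<Sigma> \<delta> q0 F" "set v \<subseteq> \<Sigma>"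
    by blast
  then show "w \<in> lang \<Sigma> \<delta> q0 F"
    using run_closed[OF F_closed] by (auto simp: lang_def)
qed

definition induced :: "'s set \<Rightarrow> 'a set \<Rightarrow> ('a \<Rightarrow> 's \<Rightarrow> 's) \<Rightarrow> ('s \<Rightarrow> 's) \<Rightarrow> bool" where
  "induced Q \<Sigma> \<delta> f \<longleftrightarrow> (\<exists>w. w \<noteq> [] \<and> set w \<subseteq> \<Sigma> \<and> (\<forall>q\<in>Q. run \<delta> q w = f q))"

lemma trans_semigroup_eq_induced:
  "trans_semigroup Q \<Sigma> \<delta> = {restrict f Q |f. induced Q \<Sigma> \<delta> f}"
  unfolding trans_semigroup_def induced_def
  by (auto intro: restrict_ext) (metis restrict_ext)

lemma induced_cong: "induced Q \<Sigma> \<delta> f \<Longrightarrow> (\<And>q. q \<in> Q \<Longrightarrow> f q = g q) \<Longrightarrow> induced Q \<Sigma> \<delta> g"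
  unfolding induced_def by auto

lemma induced_letter: "a \<in> \<Sigma> \<Longrightarrow> induced Q \<Sigma> \<delta> (\<delta> a)"
  unfolding induced_def by (intro exI[of _ "[a]"]) auto

lemma induced_comp:
  assumes closed: "\<forall>a\<in>\<Sigma>. \<forall>q\<in>Q. \<delta> a q \<in> Q"
    and "induced Q \<Sigma> \<delta> f" and "induced Q \<Sigma> \<delta> g"
  shows "induced Q \<Sigma> \<delta> (g \<circ> f)"
proof -
  obtain u where u: "u \<noteq> []" "set u \<subseteq> \<Sigma>" "\<forall>q\<in>Q. run \<delta> q u = f q"
    using assms(2) unfolding induced_def by blast
  obtain v where v: "set v \<subseteq> \<Sigma>" "\<forall>q\<in>Q. run \<delta> q v = g q"
    using assms(3) unfolding induced_def by blast
  have "\<forall>q\<in>Q. run \<delta> q (u @ v) = (g \<circ> f) q"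
    using u v run_closed[OF closed] by fastforce
  then show ?thesis
    unfolding induced_def using u v by (intro exI[of _ "u @ v"]) auto
qed

lemma transpose_conj:
  assumes "\<And>x. p (p' x) = x" and "\<And>x. p' (p x) = x"
  shows "p \<circ> transpose a b \<circ> p' = transpose (p a) (p b)"
  using assms by (auto simp: fun_eq_iff transpose_def)

lemma fun_upd_id_conj:
  assumes "\<And>x. p (p' x) = x" and "\<And>x. p' (p x) = x"
  shows "p \<circ> id(a := b) \<circ> p' = id(p a := p b)"
  using assms by (auto simp: fun_eq_iff)

abbreviation W_induced :: "nat \<Rightarrow> (nat \<Rightarrow> nat) \<Rightarrow> bool" where
  "W_induced n \<equiv> induced {0..<n} (W_sigma n) (W_delta n)"

lemma W_delta_closed: "\<forall>a\<in>W_sigma n. \<forall>q\<in>{0..<n}. W_delta n a q \<in> {0..<n}"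
  by (auto simp: W_delta_def)

lemma W_delta_sink: "\<forall>a\<in>W_sigma n. \<forall>q\<in>{n - 1}. W_delta n a q \<in> {n - 1}"
  by (auto simp: W_delta_def)

lemma W_induced_comp: "W_induced n f \<Longrightarrow> W_induced n g \<Longrightarrow> W_induced n (g \<circ> f)"
  by (rule induced_comp[OF W_delta_closed])

lemma W_induced_conj:
  "W_induced n p \<Longrightarrow> W_induced n f \<Longrightarrow> W_induced n p' \<Longrightarrow> W_induced n (p \<circ> f \<circ> p')"
  by (rule W_induced_comp[OF _ W_induced_comp])

definition rotation :: "nat \<Rightarrow> nat \<Rightarrow> nat \<Rightarrow> nat" where
  "rotation m k q = (if q < m then (q + k) mod m else q)"

lemma rotation_0: "rotation m 0 q = q"
  by (simp add: rotation_def)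

lemma rotation_add: "rotation m k (rotation m l q) = rotation m (k + l) q"
  by (simp add: rotation_def mod_add_right_eq ac_simps)

lemma rotation_period: "rotation m m q = q"
  by (simp add: rotation_def)

lemma rotation_inverse:
  assumes "k \<le> m"
  shows "rotation m k (rotation m (m - k) q) = q" and "rotation m (m - k) (rotation m k q) = q"
  using assms by (simp_all add: rotation_add rotation_period)

context
  fixes n :: nat
  assumes n: "3 \<le> n"
begin

lemma W_sigma_ge3: "W_sigma n = {0, 1, 2, 3}"
  using n by (simp add: W_sigma_def)

lemma W_delta_a: "W_delta n 0 = rotation (n - 1) 1"
proof
  fix q
  show "W_delta n 0 q = rotation (n - 1) 1 q"
    using n by (cases "q < n - 2"; cases "q = n - 2") (auto simp: W_delta_def rotation_def numeral_2_eq_2 Suc_diff_Suc)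
qed

lemma W_delta_b: "W_delta n 1 = transpose 0 1"
  using n by (auto simp: fun_eq_iff W_delta_def transpose_def)

lemma W_delta_c: "W_delta n 2 = id(n - 2 := 0)"
  using n by (auto simp: fun_eq_iff W_delta_def)

lemma W_delta_d: "W_delta n 3 = id(n - 2 := n - 1)"
  using n by (auto simp: fun_eq_iff W_delta_def)

lemma W_induced_letters:
  "W_induced n (transpose 0 1)" "W_induced n (id(n - 2 := 0))" "W_induced n (id(n - 2 := n - 1))"
  using induced_letter[of 1 "W_sigma n" "{0..<n}" "W_delta n"]
    induced_letter[of 2 "W_sigma n" "{0..<n}" "W_delta n"]
    induced_letter[of 3 "W_sigma n" "{0..<n}" "W_delta n"]
  unfolding W_delta_b W_delta_c W_delta_d by (simp_all add: W_sigma_ge3)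

lemma run_W_replicate_a: "run (W_delta n) q (replicate k 0) = rotation (n - 1) k q"
  by (induction k arbitrary: q) (simp_all add: rotation_0 W_delta_a rotation_add)

lemma W_induced_rotation: "W_induced n (rotation (n - 1) k)"
  unfolding induced_def
proof (intro exI conjI)
  show "replicate (k + (n - 1)) 0 \<noteq> []" and "set (replicate (k + (n - 1)) 0) \<subseteq> W_sigma n"
    using n by (auto simp: W_sigma_ge3)
  have "rotation (n - 1) (k + (n - 1)) q = rotation (n - 1) k q" for q
    by (simp only: rotation_add[symmetric] rotation_period)
  then show "\<forall>q\<in>{0..<n}. run (W_delta n) q (replicate (k + (n - 1)) 0) = rotation (n - 1) k q"
    by (simp only: run_W_replicate_a) blast
qed

lemma W_induced_adjacent_transpose:
  assumes "Suc i < n - 1"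
  shows "W_induced n (transpose i (Suc i))"
proof -
  let ?p = "rotation (n - 1) i" and ?p' = "rotation (n - 1) (n - 1 - i)"
  have "W_induced n (?p \<circ> transpose 0 1 \<circ> ?p')"
    using W_induced_conj W_induced_rotation W_induced_letters(1) by blast
  moreover have "?p \<circ> transpose 0 1 \<circ> ?p' = transpose (?p 0) (?p 1)"
    using assms by (intro transpose_conj rotation_inverse) simp_all
  moreover have "?p 0 = i" and "?p 1 = Suc i"
    using assms by (auto simp: rotation_def)
  ultimately show ?thesis by simp
qed

lemma W_induced_id: "W_induced n id"
  using W_induced_comp[OF W_induced_letters(1) W_induced_letters(1)] by simp

lemma W_induced_transpose_less:
  assumes "i < j" and "j < n - 1"
  shows "W_induced n (transpose i j)"
  using assms
proof (induction j)
  case (Suc j)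
  show ?case
  proof (cases "i = j")
    case True
    then show ?thesis using Suc.prems W_induced_adjacent_transpose by simp
  next
    case False
    then have "W_induced n (transpose (Suc j) j \<circ> transpose j i \<circ> transpose (Suc j) j)"
      using Suc W_induced_conj W_induced_adjacent_transpose by (simp add: transpose_commute)
    moreover have "transpose (Suc j) j \<circ> transpose j i \<circ> transpose (Suc j) j = transpose (Suc j) i"
      using False Suc.prems by (intro transpose_comp_triple) auto
    ultimately show ?thesis
      by (simp add: transpose_commute)
  qed
qed simp

lemma W_induced_transpose:
  assumes "i < n - 1" and "j < n - 1"
  shows "W_induced n (transpose i j)"
  using assms W_induced_id W_induced_transpose_less[of i j] W_induced_transpose_less[of j i]
  by (cases i j rule: linorder_cases) (simp_all add: transpose_commute)

lemma W_induced_permutation: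
  assumes "p permutes {0..<n - 1}"
  shows "W_induced n p"
  using assms finite_atLeastLessThan
proof (induction rule: permutes_induct)
  case id
  then show ?case by (fact W_induced_id)
next
  case (swap a b p)
  then show ?case
    using W_induced_comp[OF swap.IH W_induced_transpose[of a b]] by (simp add: comp_def)
qed

lemma W_induced_merge_into:
  assumes "z < n" and "z \<noteq> n - 2"
  shows "W_induced n (id(n - 2 := z))"
proof (cases "z = n - 1")
  case True
  then show ?thesis using W_induced_letters(3) by simp
next
  case False
  let ?\<tau> = "transpose 0 z"
  have "W_induced n (?\<tau> \<circ> id(n - 2 := 0) \<circ> ?\<tau>)"
    using assms False W_induced_conj W_induced_transpose W_induced_letters(2) by simp
  moreover have "?\<tau> \<circ> id(n - 2 := 0) \<circ> ?\<tau> = id(?\<tau> (n - 2) := ?\<tau> 0)"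
    by (intro fun_upd_id_conj) simp_all
  moreover have "?\<tau> (n - 2) = n - 2"
    using assms n by simp
  ultimately show ?thesis by simp
qed

lemma W_induced_merge:
  assumes "y < n - 1" and "z < n" and "y \<noteq> z"
  shows "W_induced n (id(y := z))"
proof -
  let ?\<tau> = "transpose y (n - 2)"
  have "W_induced n (?\<tau> \<circ> id(n - 2 := ?\<tau> z) \<circ> ?\<tau>)"
    using assms n
    by (intro W_induced_conj W_induced_transpose W_induced_merge_into) (auto simp: transpose_def)
  moreover have "?\<tau> \<circ> id(n - 2 := ?\<tau> z) \<circ> ?\<tau> = id(?\<tau> (n - 2) := ?\<tau> (?\<tau> z))"
    by (intro fun_upd_id_conj) simp_all
  ultimately show ?thesis by simp
qed

lemma W_induced_bijective:
  assumes image: "g ` {0..<n - 1} = {0..<n - 1}" and last: "g (n - 1) = n - 1"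
  shows "W_induced n g"
proof -
  define p where "p q = (if q < n - 1 then g q else q)" for q
  have image_p: "p ` {0..<n - 1} = {0..<n - 1}"
    using image by (simp add: p_def)
  have "p permutes {0..<n - 1}"
  proof (rule bij_imp_permutes)
    show "bij_betw p {0..<n - 1} {0..<n - 1}"
      using image_p by (simp add: bij_betw_def eq_card_imp_inj_on)
  qed (simp add: p_def)
  then have "W_induced n p"
    by (rule W_induced_permutation)
  then show ?thesis
  proof (rule induced_cong)
    fix q assume "q \<in> {0..<n}"
    then show "p q = g q"
      using last by (cases "q = n - 1") (auto simp: p_def)
  qed
qed

text \<open>If some \<open>y < n - 1\<close> is not hit by \<open>g\<close>, then \<open>g = id(y := g y) \<circ> g(y := y)\<close> on \<open>{0..<n}\<close>
  and \<open>g(y := y)\<close> moves fewer points; otherwise \<open>g\<close> permutes \<open>{0..<n - 1}\<close>.\<close>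

lemma W_induced_fixing_last:
  assumes "\<And>q. q < n \<Longrightarrow> g q < n" and "g (n - 1) = n - 1"
  shows "W_induced n g"
  using assms
proof (induction "card {q. q < n - 1 \<and> g q \<noteq> q}" arbitrary: g rule: less_induct)
  case less
  show ?case
  proof (cases "\<exists>y < n - 1. \<forall>q < n - 1. g q \<noteq> y")
    case True
    then obtain y where y: "y < n - 1" and not_hit: "\<And>q. q < n - 1 \<Longrightarrow> g q \<noteq> y"
      by blast
    let ?h = "g(y := y)"
    have "{q. q < n - 1 \<and> ?h q \<noteq> q} \<subset> {q. q < n - 1 \<and> g q \<noteq> q}"
      using y not_hit by auto
    then have "W_induced n ?h"
      using less y by (intro less.hyps psubset_card_mono) auto
    moreover have "W_induced n (id(y := g y))"
      using y not_hit[OF y] less.prems by (intro W_induced_merge) auto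
    ultimately have "W_induced n (id(y := g y) \<circ> ?h)"
      by (rule W_induced_comp)
    then show ?thesis
    proof (rule induced_cong)
      fix q assume "q \<in> {0..<n}"
      then have "g q \<noteq> y"
        using y not_hit less.prems(2) by (cases "q = n - 1") auto
      then show "(id(y := g y) \<circ> ?h) q = g q"
        by simp
    qed
  next
    case False
    then have hit: "{0..<n - 1} \<subseteq> g ` {0..<n - 1}"
      by force
    have "{0..<n - 1} = g ` {0..<n - 1}"
      using card_seteq[OF _ hit] card_image_le[of "{0..<n - 1}" g] by simp
    then show ?thesis
      using less.prems(2) by (intro W_induced_bijective) simp_all
  qed
qed

end

lemma W_induced_iff:
  assumes "1 \<le> n"
  shows "W_induced n g \<longleftrightarrow> (\<forall>q<n. g q < n) \<and> g (n - 1) = n - 1"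
proof
  assume "W_induced n g"
  then obtain w where w: "set w \<subseteq> W_sigma n" "\<forall>q\<in>{0..<n}. run (W_delta n) q w = g q"
    unfolding induced_def by blast
  have "g q < n" if "q < n" for q
    using w run_closed[OF W_delta_closed _ w(1), of q] that by auto
  moreover have "g (n - 1) = n - 1"
    using w run_closed[OF W_delta_sink _ w(1), of "n - 1"] assms by auto
  ultimately show "(\<forall>q<n. g q < n) \<and> g (n - 1) = n - 1"
    by blast
next
  assume g: "(\<forall>q<n. g q < n) \<and> g (n - 1) = n - 1"
  consider "n = 1" | "n = 2" | "3 \<le> n"
    using assms by linarith
  then show "W_induced n g"
  proof cases
    case 1
    then show ?thesis
      using g by (intro induced_cong[OF induced_letter[of 0]]) (auto simp: W_sigma_def W_delta_def)
  next
    case 2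
    then consider "g 0 = 0" | "g 0 = 1"
      using g by fastforce
    then show ?thesis
    proof cases
      case 1
      then show ?thesis
        using g \<open>n = 2\<close> by (intro induced_cong[OF induced_letter[of 1]])
          (auto simp: W_sigma_def W_delta_def less_2_cases_iff)
    next
      case 2
      then show ?thesis
        using g \<open>n = 2\<close> by (intro induced_cong[OF induced_letter[of 0]])
          (auto simp: W_sigma_def W_delta_def less_2_cases_iff)
    qed
  next
    case 3
    then show ?thesis
      using g by (intro W_induced_fixing_last) auto
  qed
qed

lemma trans_semigroup_W:
  assumes "1 \<le> n"
  shows "trans_semigroup {0..<n} (W_sigma n) (W_delta n)
    = (\<Pi>\<^sub>E q\<in>{0..<n}. if q = n - 1 then {n - 1} else {0..<n})"
proof -
  have "f \<in> {restrict g {0..<n} |g. W_induced n g}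
      \<longleftrightarrow> f \<in> (\<Pi>\<^sub>E q\<in>{0..<n}. if q = n - 1 then {n - 1} else {0..<n})" for f
  proof
    assume "f \<in> {restrict g {0..<n} |g. W_induced n g}"
    then show "f \<in> (\<Pi>\<^sub>E q\<in>{0..<n}. if q = n - 1 then {n - 1} else {0..<n})"
      using assms by (auto simp: W_induced_iff)
  next
    assume f: "f \<in> (\<Pi>\<^sub>E q\<in>{0..<n}. if q = n - 1 then {n - 1} else {0..<n})"
    have "f q < n" if "q < n" for q
      using PiE_mem[OF f, of q] that assms by (auto split: if_splits)
    moreover have "f (n - 1) = n - 1"
      using PiE_mem[OF f, of "n - 1"] assms by simp
    ultimately have "W_induced n f"
      using assms by (simp add: W_induced_iff)
    moreover have "f = restrict f {0..<n}"
      using f by (simp add: PiE_iff extensional_restrict)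
    ultimately show "f \<in> {restrict g {0..<n} |g. W_induced n g}"
      by blast
  qed
  then show ?thesis
    by (auto simp: trans_semigroup_eq_induced)
qed

lemma card_trans_semigroup_W:
  assumes "1 \<le> n"
  shows "card (trans_semigroup {0..<n} (W_sigma n) (W_delta n)) = n ^ (n - 1)"
proof -
  have "{0..<n} = insert (n - 1) {0..<n - 1}"
    using assms by auto
  then have "(\<Prod>q\<in>{0..<n}. card (if q = n - 1 then {n - 1} else {0..<n})) = n ^ (n - 1)"
    by simp
  then show ?thesis
    by (simp add: trans_semigroup_W[OF assms] card_PiE)
qed

lemma W_run_realizes:
  assumes "1 \<le> n" and "\<forall>q<n. g q < n" and "g (n - 1) = n - 1"
  obtains w where "set w \<subseteq> W_sigma n" and "\<And>q. q < n \<Longrightarrow> run (W_delta n) q w = g q"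
  using assms W_induced_iff[of n g] unfolding induced_def by auto

lemma W_reachable:
  assumes "1 \<le> n" and "q < n"
  shows "\<exists>w. set w \<subseteq> W_sigma n \<and> run (W_delta n) 0 w = q"
proof (cases "q = 0")
  case True
  then show ?thesis by (intro exI[of _ "[]"]) simp
next
  case False
  then obtain w where "set w \<subseteq> W_sigma n" and "run (W_delta n) 0 w = (id(0 := q)) 0"
    using assms by (elim W_run_realizes[of n "id(0 := q)"]) auto
  then show ?thesis by auto
qed

lemma W_distinguishable:
  assumes "1 \<le> n" and "p < n" and "q < n" and "p \<noteq> q"
  shows "\<exists>v. set v \<subseteq> W_sigma n \<and> (run (W_delta n) p v = n - 1) \<noteq> (run (W_delta n) q v = n - 1)"
proof (cases "p = n - 1 \<or> q = n - 1")
  case True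
  then show ?thesis using assms by (intro exI[of _ "[]"]) auto
next
  case False
  then obtain v where "set v \<subseteq> W_sigma n" and "\<And>r. r < n \<Longrightarrow> run (W_delta n) r v = (id(p := n - 1)) r"
    using assms by (elim W_run_realizes[of n "id(p := n - 1)"]) auto
  then show ?thesis
    using assms False by (intro exI[of _ v]) auto
qed

lemma minimal_dfa_W:
  assumes "1 \<le> n"
  shows "minimal_dfa {0..<n} (W_sigma n) (W_delta n) 0 {n - 1}"
proof (rule minimal_dfa_if_reachable_distinguishable)
  show "is_dfa {0..<n} (W_sigma n) (W_delta n) 0 {n - 1}"
    using assms W_delta_closed by (auto simp: is_dfa_def W_sigma_def)
qed (use assms W_reachable W_distinguishable in auto)

lemma right_ideal_W:
  assumes "1 \<le> n"
  shows "right_ideal (W_sigma n) (lang (W_sigma n) (W_delta n) 0 {n - 1})"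
proof (rule right_ideal_if_final_closed)
  show "lang (W_sigma n) (W_delta n) 0 {n - 1} \<noteq> {}"
    using W_reachable[OF assms, of "n - 1"] assms by (auto simp: lang_def)
qed (fact W_delta_sink)

theorem lemma1:
  fixes n :: nat
  assumes "n \<ge> 1"
  shows "minimal_dfa {0..<n} (W_sigma n) (W_delta n) 0 {n - 1}
       \<and> right_ideal (W_sigma n) (lang (W_sigma n) (W_delta n) 0 {n - 1})
       \<and> card (trans_semigroup {0..<n} (W_sigma n) (W_delta n)) = n ^ (n - 1)"
  using assms minimal_dfa_W right_ideal_W card_trans_semigroup_W by simp

end
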